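(* Let $m\ge 2$. If $s=2m-1$ then $|T_s|=m^2-m$ and $\sum_{h\in T_s}h=\frac23m^4-m^3-\frac16m^2+\frac12m$; if $s=2m$ then $|T_s|=m^2$ and $\sum_{h\in T_s}h=\frac23m^4+\frac13m^3-\frac16m^2+\frac16m$. Moreover, for $s=2m-1$ the partition $\kappa_s$ with $\beta(\kappa_s)=T_s$ has length $m^2-m$ and largest part $m^2-2m+1$.
   Context: $T_s$ is the set of positive integers not expressible as $k_1s+k_2(s+1)+k_3(s+2)$ with $k_1,k_2,k_3$ nonnegative integers. The $\beta$-set of a partition is the set of hook lengths of its first-column boxes; the partition with $\beta$-set $\{h_1>\cdots>h_m\}$ is $(h_1-(m-1),h_2-(m-2),\ldots,h_m)$. *)

theory Defs
  imports Complex_Main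
begin

definition T :: "nat \<Rightarrow> nat set" where
  "T s = {h::nat. 0 < h \<and> \<not> (\<exists>k1 k2 k3. h = k1 * s + k2 * (s + 1) + k3 * (s + 2))}"

text \<open>The partition (as a weakly decreasing list of parts, zero parts removed) whose
  beta-set is the finite set B = {h_1 > ... > h_n}: parts h_i - (n - i).\<close>
definition beta_partition :: "nat set \<Rightarrow> nat list" where
  "beta_partition B =
     (let hs = rev (sorted_list_of_set B); n = length hs
      in filter (\<lambda>x. 0 < x) (map (\<lambda>i. hs ! i - (n - 1 - i)) [0..<n]))"

end

theory Submission
  imports Defs
begin

(* Write h = q s + r with 0 <= r < s. A sum of k of the generators s, s + 1, s + 2 has the
   form k s + r' with 0 <= r' <= 2 k, so h is representable iff r <= 2 q. Hence T_s is the
   disjoint union over q < s div 2 of the blocks [q (s + 2) + 1, (q + 1) s), of length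
   s - 2 q - 1, and |T_s| and the sum of T_s are polynomial sums over q. As 0 is not in T_s,
   listing T_s as h_0 < h_1 < ... the parts h_j - j of kappa_s are all positive, so kappa_s
   has |T_s| parts, the largest being max T_s - (|T_s| - 1), where max T_s = (s div 2) s - 1. *)

lemma representable_iff_exists_le_double:
  "(\<exists>k1 k2 k3. h = k1 * s + k2 * (s + 1) + k3 * (s + 2)) \<longleftrightarrow>
   (\<exists>k r. r \<le> 2 * k \<and> h = k * s + (r::nat))"
proof
  assume "\<exists>k1 k2 k3. h = k1 * s + k2 * (s + 1) + k3 * (s + 2)"
  then obtain k1 k2 k3 where "h = k1 * s + k2 * (s + 1) + k3 * (s + 2)" by blast
  then have "h = (k1 + k2 + k3) * s + (k2 + 2 * k3)" by (simp add: algebra_simps)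
  then show "\<exists>k r. r \<le> 2 * k \<and> h = k * s + r"
    by (intro exI[of _ "k1 + k2 + k3"] exI[of _ "k2 + 2 * k3"]) simp
next
  assume "\<exists>k r. r \<le> 2 * k \<and> h = k * s + r"
  then obtain k r where r: "r \<le> 2 * k" and h: "h = k * s + r" by blast
  define a b where "a = r div 2" and "b = r mod 2"
  have rab: "r = 2 * a + b" and "b \<le> 1" by (simp_all add: a_def b_def)
  then have "a + b \<le> k" using r by presburger
  define c where "c = k - a - b"
  have k: "k = c + b + a" using \<open>a + b \<le> k\<close> unfolding c_def by arith
  have "h = c * s + b * (s + 1) + a * (s + 2)"
    using h unfolding k rab by (simp add: algebra_simps)
  then show "\<exists>k1 k2 k3. h = k1 * s + k2 * (s + 1) + k3 * (s + 2)" by blast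
qed

lemma exists_le_double_iff_mod_le_double_div:
  assumes "0 < s"
  shows "(\<exists>k r. r \<le> 2 * k \<and> h = k * s + r) \<longleftrightarrow> h mod s \<le> 2 * (h div (s::nat))"
proof
  assume "\<exists>k r. r \<le> 2 * k \<and> h = k * s + r"
  then obtain k r where r: "r \<le> 2 * k" and h: "h = k * s + r" by blast
  have k: "k \<le> h div s" using assms h by (simp add: less_eq_div_iff_mult_less_eq)
  have "h mod s = h - h div s * s" by (simp add: minus_div_mult_eq_mod)
  also have "\<dots> \<le> h - k * s" using k by (simp add: diff_le_mono2)
  also have "\<dots> = r" using h by simp
  finally show "h mod s \<le> 2 * (h div s)" using r k by linarith
next
  assume "h mod s \<le> 2 * (h div s)"
  then show "\<exists>k r. r \<le> 2 * k \<and> h = k * s + r"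
    by (intro exI[of _ "h div s"] exI[of _ "h mod s"]) simp
qed

lemma mem_T_iff: "0 < s \<Longrightarrow> h \<in> T s \<longleftrightarrow> 0 < h \<and> 2 * (h div s) < h mod s"
  using exists_le_double_iff_mod_le_double_div[of s h]
  unfolding T_def representable_iff_exists_le_double by auto

lemma div_eq_if_mem_block: "x \<in> {q * (s + 2) + 1..<(q + 1) * s} \<Longrightarrow> x div s = (q::nat)"
  by (intro div_nat_eqI) (auto simp: algebra_simps)

lemma T_eq_UN_blocks:
  assumes "0 < s"
  shows "T s = (\<Union>q<s div 2. {q * (s + 2) + 1..<(q + 1) * s})"
proof (intro set_eqI iffI)
  fix x assume "x \<in> T s"
  define q r where "q = x div s" and "r = x mod s"
  have x: "x = q * s + r" by (simp add: q_def r_def)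
  have "2 * q < r" "r < s"
    using \<open>x \<in> T s\<close> mem_T_iff[OF assms] assms by (auto simp: q_def r_def)
  then have "q < s div 2" "x \<in> {q * (s + 2) + 1..<(q + 1) * s}"
    unfolding x by (auto simp: algebra_simps)
  then show "x \<in> (\<Union>q<s div 2. {q * (s + 2) + 1..<(q + 1) * s})" by blast
next
  fix x assume "x \<in> (\<Union>q<s div 2. {q * (s + 2) + 1..<(q + 1) * s})"
  then obtain q where x: "x \<in> {q * (s + 2) + 1..<(q + 1) * s}" by blast
  have "x div s = q" by (rule div_eq_if_mem_block[OF x])
  then have "x mod s = x - q * s" by (metis minus_div_mult_eq_mod)
  moreover have "q * (s + 2) + 1 \<le> x" using x by simp
  ultimately have "2 * (x div s) < x mod s" using \<open>x div s = q\<close> by (simp add: algebra_simps)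
  moreover have "0 < x" using x by simp
  ultimately show "x \<in> T s" using mem_T_iff[OF assms] by simp
qed

lemma finite_T: "0 < s \<Longrightarrow> finite (T s)"
  by (simp add: T_eq_UN_blocks)

lemma zero_notin_T: "0 \<notin> T s"
  by (simp add: T_def)

lemma sum_T_eq_sum_blocks:
  assumes "0 < s"
  shows "sum f (T s) = (\<Sum>q<s div 2. sum f {q * (s + 2) + 1..<(q + 1) * s})"
  unfolding T_eq_UN_blocks[OF assms]
  by (rule sum.UNION_disjoint) (use div_eq_if_mem_block in blast)+

lemma sum_lessThan_diff_Suc_double:
  "2 * n \<le> s \<Longrightarrow> (\<Sum>q<n. s - 2 * q - 1) = n * (s - (n::nat))"
proof (induction n)
  case (Suc n)
  then obtain t where "s = 2 * n + 2 + t" by (metis add.commute le_Suc_ex mult_Suc_right)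
  with Suc show ?case by (simp add: algebra_simps)
qed simp

lemma card_T: "0 < s \<Longrightarrow> card (T s) = s div 2 * (s - s div 2)"
proof -
  assume "0 < s"
  have "card (T s) = (\<Sum>q<s div 2. card {q * (s + 2) + 1..<(q + 1) * s})"
    unfolding card_eq_sum by (rule sum_T_eq_sum_blocks[OF \<open>0 < s\<close>])
  also have "\<dots> = (\<Sum>q<s div 2. s - 2 * q - 1)"
    by (rule sum.cong) (simp_all add: algebra_simps)
  also have "\<dots> = s div 2 * (s - s div 2)"
    by (rule sum_lessThan_diff_Suc_double) simp
  finally show ?thesis .
qed

lemma double_sum_atLeastLessThan:
  "a \<le> b \<Longrightarrow> 2 * (\<Sum>h\<in>{a..<b}. real h) = (real b - real a) * (real a + real b - 1)"
proof (induction b rule: dec_induct)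
  case (step b)
  then show ?case by (simp add: algebra_simps)
qed simp

lemma sum_lessThan_block_sums:
  "3 * (\<Sum>q<n. (x - 2 * real q - 1) * (2 * real q * (x + 1) + x)) =
   real n * (3 * x * (x - 1) + 3 * (x\<^sup>2 - x - 1) * (real n - 1)
             - 2 * (x + 1) * (real n - 1) * (2 * real n - 1))"
  by (induction n) (simp_all add: algebra_simps power2_eq_square)

lemma sum_T:
  assumes s: "0 < s"
  defines "n \<equiv> real (s div 2)"
  shows "6 * real (\<Sum>h\<in>T s. h) =
    n * (3 * real s * (real s - 1) + 3 * ((real s)\<^sup>2 - real s - 1) * (n - 1)
         - 2 * (real s + 1) * (n - 1) * (2 * n - 1))"
proof -
  have "2 * real (\<Sum>h\<in>T s. h) =
      (\<Sum>q<s div 2. 2 * (\<Sum>h\<in>{q * (s + 2) + 1..<(q + 1) * s}. real h))"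
    using sum_T_eq_sum_blocks[OF s, of real] by (simp add: sum_distrib_left)
  also have "\<dots> = (\<Sum>q<s div 2. (real s - 2 * real q - 1) * (2 * real q * (real s + 1) + real s))"
  proof (rule sum.cong)
    fix q assume "q \<in> {..<s div 2}"
    then have "q * (s + 2) + 1 \<le> (q + 1) * s" by (simp add: algebra_simps)
    then show "2 * (\<Sum>h\<in>{q * (s + 2) + 1..<(q + 1) * s}. real h) =
        (real s - 2 * real q - 1) * (2 * real q * (real s + 1) + real s)"
      by (simp add: double_sum_atLeastLessThan algebra_simps)
  qed simp
  finally show ?thesis
    using sum_lessThan_block_sums[of "real s" "s div 2"] unfolding n_def by linarith
qed

lemma card_T_odd: "0 < m \<Longrightarrow> card (T (2 * m - 1)) = m\<^sup>2 - m"
proof -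
  assume "0 < m"
  then have "(2 * m - 1) div 2 = m - 1" "2 * m - 1 - (m - 1) = m" by linarith+
  then show ?thesis
    using \<open>0 < m\<close> by (simp add: card_T power2_eq_square algebra_simps diff_mult_distrib)
qed

lemma card_T_even: "0 < m \<Longrightarrow> card (T (2 * m)) = m\<^sup>2"
  by (simp add: card_T power2_eq_square)

lemma sum_T_odd:
  assumes "0 < m"
  shows "real (\<Sum>h\<in>T (2 * m - 1). h)
           = 2/3 * real m^4 - real m^3 - 1/6 * real m^2 + 1/2 * real m"
proof -
  have "(2 * m - 1) div 2 = m - 1" using assms by linarith
  moreover have "real (2 * m - 1) = 2 * real m - 1" "real (m - 1) = real m - 1"
    using assms by (simp_all add: of_nat_diff)
  ultimately show ?thesis using sum_T[of "2 * m - 1"] assms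
    by (simp add: algebra_simps power2_eq_square power3_eq_cube power4_eq_xxxx)
qed

lemma sum_T_even:
  assumes "0 < m"
  shows "real (\<Sum>h\<in>T (2 * m). h)
           = 2/3 * real m^4 + 1/3 * real m^3 - 1/6 * real m^2 + 1/6 * real m"
  using sum_T[of "2 * m"] assms
  by (simp add: algebra_simps power2_eq_square power3_eq_cube power4_eq_xxxx)

lemma Max_T:
  assumes "2 \<le> s"
  shows "Max (T s) = s div 2 * s - 1"
proof (rule Max_eqI)
  show "finite (T s)" using assms by (simp add: finite_T)
next
  fix h assume "h \<in> T s"
  then obtain q where "q < s div 2" "h < (q + 1) * s" using assms by (auto simp: T_eq_UN_blocks)
  moreover have "(q + 1) * s \<le> s div 2 * s"
    by (rule mult_le_mono1) (use \<open>q < s div 2\<close> in simp)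
  ultimately show "h \<le> s div 2 * s - 1" by linarith
next
  have "0 < s div 2" using assms by simp
  then obtain p where p: "s div 2 = p + 1" using gr0_implies_Suc by auto
  then have "2 * p + 2 \<le> s" by linarith
  then have "s div 2 * s - 1 \<in> {p * (s + 2) + 1..<(p + 1) * s}"
    unfolding p by (simp add: algebra_simps)
  then show "s div 2 * s - 1 \<in> T s" using assms p by (auto simp: T_eq_UN_blocks)
qed

lemma sorted_wrt_less_nth_add_le:
  "sorted_wrt (<) xs \<Longrightarrow> j + k < length xs \<Longrightarrow> xs ! j + k \<le> xs ! (j + k :: nat)"
proof (induction k)
  case (Suc k)
  have "xs ! (j + k) < xs ! (j + Suc k)"
    using Suc.prems by (intro sorted_wrt_nth_less) auto
  with Suc show ?case by simp
qed simp

lemma beta_partition_eq: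
  assumes "finite B" and "0 \<notin> B"
  shows "beta_partition B = map (\<lambda>j. sorted_list_of_set B ! j - j) (rev [0..<card B])"
proof -
  define L where "L = sorted_list_of_set B"
  have L: "sorted_wrt (<) L" "length L = card B" "set L = B"
    using assms(1) by (simp_all add: L_def)
  have "0 < L ! j - j" if "j < card B" for j
  proof -
    have "L ! 0 \<in> B" using that L by (metis gr_zeroI not_less0 nth_mem)
    then show ?thesis
      using sorted_wrt_less_nth_add_le[OF L(1), of 0 j] that L assms(2) by (cases "L ! 0") auto
  qed
  moreover have "map (\<lambda>i. rev L ! i - (card B - 1 - i)) [0..<card B]
      = map (\<lambda>j. L ! j - j) (rev [0..<card B])"
    using L(2) by (intro nth_equalityI) (simp_all add: rev_nth)
  ultimately show ?thesis
    unfolding beta_partition_def Let_def L(2)[symmetric, unfolded L_def] L_def[symmetric]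
    by (auto intro!: filter_True)
qed

lemma length_beta_partition:
  "finite B \<Longrightarrow> 0 \<notin> B \<Longrightarrow> length (beta_partition B) = card B"
  by (simp add: beta_partition_eq)

lemma Max_beta_partition:
  assumes "finite B" and "0 \<notin> B" and "B \<noteq> {}"
  shows "Max (set (beta_partition B)) = Max B - (card B - 1)"
proof -
  define L where "L = sorted_list_of_set B"
  define n where "n = card B"
  have L: "sorted_wrt (<) L" "length L = n" "set L = B"
    using assms(1) by (simp_all add: L_def n_def)
  have "0 < n" using assms by (simp add: n_def card_gt_0_iff)
  have top: "L ! j + (n - 1 - j) \<le> L ! (n - 1)" if "j < n" for j
    using sorted_wrt_less_nth_add_le[OF L(1), of j "n - 1 - j"] that L(2) by simp
  have Max_B: "Max B = L ! (n - 1)"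
  proof (rule Max_eqI[OF assms(1)])
    fix y assume "y \<in> B"
    then obtain j where "j < n" "y = L ! j" using L by (metis in_set_conv_nth)
    then show "y \<le> L ! (n - 1)" using top by fastforce
  qed (use L \<open>0 < n\<close> in auto)
  have parts: "set (beta_partition B) = (\<lambda>j. L ! j - j) ` {..<n}"
    using assms by (simp add: beta_partition_eq L_def n_def atLeast0LessThan)
  have "Max (set (beta_partition B)) = L ! (n - 1) - (n - 1)"
  proof (rule Max_eqI)
    fix y assume "y \<in> set (beta_partition B)"
    then obtain j where "j < n" "y = L ! j - j" using parts by auto
    then show "y \<le> L ! (n - 1) - (n - 1)" using top[of j] by simp
  next
    show "L ! (n - 1) - (n - 1) \<in> set (beta_partition B)"
      unfolding parts using \<open>0 < n\<close> by (intro image_eqI[of _ _ "n - 1"]) simp_all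
  qed simp
  then show ?thesis unfolding Max_B n_def .
qed

theorem mainTheorem9:
  fixes m :: nat
  assumes "m \<ge> 2"
  shows "card (T (2*m - 1)) = m^2 - m
       \<and> real (\<Sum>h\<in>T (2*m - 1). h)
           = 2/3 * real m^4 - real m^3 - 1/6 * real m^2 + 1/2 * real m
       \<and> card (T (2*m)) = m^2
       \<and> real (\<Sum>h\<in>T (2*m). h)
           = 2/3 * real m^4 + 1/3 * real m^3 - 1/6 * real m^2 + 1/6 * real m
       \<and> length (beta_partition (T (2*m - 1))) = m^2 - m
       \<and> Max (set (beta_partition (T (2*m - 1)))) = m^2 - 2*m + 1"
proof -
  obtain k where m: "m = k + 2" using assms by (metis add.commute le_add_diff_inverse)
  have s: "2 * m - 1 = 2 * k + 3" and half: "(2 * k + 3) div 2 = k + 1" unfolding m by simp_all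
  have card: "card (T (2 * m - 1)) = m\<^sup>2 - m" using card_T_odd[of m] m by simp
  have fin: "finite (T (2 * m - 1))" using finite_T[of "2 * m - 1"] m by simp
  have ne: "T (2 * m - 1) \<noteq> {}" using card unfolding m by (auto simp: power2_eq_square)
  have "Max (T (2 * m - 1)) = (k + 1) * (2 * k + 3) - 1"
    using Max_T[of "2 * k + 3"] half unfolding s by simp
  then have "Max (T (2 * m - 1)) - (card (T (2 * m - 1)) - 1) = m\<^sup>2 - 2 * m + 1"
    unfolding card unfolding m by (simp add: power2_eq_square algebra_simps)
  then show ?thesis
    using card card_T_even[of m] sum_T_odd[of m] sum_T_even[of m] m
      length_beta_partition[OF fin zero_notin_T] Max_beta_partition[OF fin zero_notin_T ne]
    by simp
qed

end
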